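(* Assume the setting below, on the Shishkin mesh $S_N$ (i.e. $\lambda=N$) with mesh parameter $a\ge a_*:=\dfrac{\beta}{b(0)-\beta}$. Then the truncation error of $v$ satisfies \[ |\tau_i[v]|\le C\begin{cases} N^{-2}(\ln N)^2e^{-\beta x_i/\varepsilon}, & 1\le i\le J-1,\\ N^{-a}, & J\le i\le N-1,\end{cases} \] with $C$ independent of $\varepsilon$ and $N$.
   Context: Let $0<\varepsilon<1$. Let $b,c,f\in C^4[0,1]$, and let $\beta$ be a constant with $b(x)>\beta>0$ and $c(x)\ge0$ on $[0,1]$. Let $u$ be the solution of $-\varepsilon u''-bu'+cu=f$ on $(0,1)$ with $u(0)=u(1)=0$. Define \[ v(x)=-\frac{\varepsilon u'(0)}{b(0)}e^{-b(0)x/\varepsilon}. \] Mesh $S_\lambda$, $\lambda\in\{N,\varepsilon^{-1}\}$. $N$ is a positive integer. $Q\in(0,1)$ is a fixed rational with $J=QN$ an integer, and $a>0$. Set $\xi=(a\varepsilon/\beta)\ln\lambda$, assumed $\le Q$, and $h=\xi/J$, $H=(1-\xi)/(N-J)$. The mesh points are $x_i=ih$ ($0\le i\le J$) and $x_i=\xi+(i-J)H$ ($J\le i\le N$). Write $h_i=x_i-x_{i-1}$ and $\hbar_i=(h_i+h_{i+1})/2$. Define $D^+g(x_i)=(g(x_{i+1})-g(x_i))/h_{i+1}$, $D^-g(x_i)=(g(x_i)-g(x_{i-1}))/h_i$, $D''g(x_i)=(D^+g(x_i)-D^-g(x_i))/\hbar_i$. Let $\sigma(\rho)=2\rho/(e^{2\rho}-1)$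 for $\rho>0$, $\sigma(0)=1$, and $\rho_i=b(x_i)h_{i+1}/(2\varepsilon)$. The truncation error of the ASI scheme is \[ \tau_i[g]=-\varepsilon\sigma(\rho_i)D''g(x_i)-b(x_i)D^+g(x_i)+\varepsilon g''(x_i)+b(x_i)g'(x_i),\qquad 1\le i\le N-1. \] *)

theory Defs
  imports "HOL-Analysis.Analysis"
begin

definition Ck_on01 :: "nat \<Rightarrow> (real \<Rightarrow> real) \<Rightarrow> bool" where
  "Ck_on01 k g \<longleftrightarrow> (\<exists>D :: nat \<Rightarrow> real \<Rightarrow> real.
      (\<forall>x\<in>{0..1}. D 0 x = g x) \<and>
      (\<forall>j\<le>k. continuous_on {0..1} (D j)) \<and>
      (\<forall>j<k. \<forall>x\<in>{0..1}. (D j has_real_derivative D (Suc j) x) (at x within {0..1})))"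

definition sh_xi :: "real \<Rightarrow> real \<Rightarrow> real \<Rightarrow> nat \<Rightarrow> real" where
  "sh_xi eps a beta N = (a * eps / beta) * ln (real N)"

text \<open>Mesh points x_i of S_N, with J = Q N fine intervals.\<close>
definition sh_mesh :: "real \<Rightarrow> real \<Rightarrow> real \<Rightarrow> nat \<Rightarrow> nat \<Rightarrow> nat \<Rightarrow> real" where
  "sh_mesh eps a beta N J i =
     (let xi = sh_xi eps a beta N; h = xi / real J; H = (1 - xi) / (real N - real J)
      in if i \<le> J then real i * h else xi + (real i - real J) * H)"

definition sigma :: "real \<Rightarrow> real" where
  "sigma r = (if r = 0 then 1 else 2 * r / (exp (2 * r) - 1))"

definition tau :: "real \<Rightarrow> (real \<Rightarrow> real) \<Rightarrow> (nat \<Rightarrow> real) \<Rightarrow> (real \<Rightarrow> real) \<Rightarrow> nat \<Rightarrow> real" where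
  "tau eps b x g i =
     (let hi = x i - x (i - 1); hi1 = x (Suc i) - x i; hb = (hi + hi1) / 2;
          Dp = (g (x (Suc i)) - g (x i)) / hi1;
          Dm = (g (x i) - g (x (i - 1))) / hi;
          D2 = (Dp - Dm) / hb;
          rho = b (x i) * hi1 / (2 * eps)
      in - eps * sigma rho * D2 - b (x i) * Dp
         + eps * deriv (deriv g) (x i) + b (x i) * deriv g (x i))"

end

theory Submission
  imports Defs
begin

text \<open>Write v = A exp (-b0 t / eps) with b0 = b 0. The maximum principle bounds |u| by a barrier,
  and then |eps u'(0)| by the mean value theorem, uniformly in eps; hence |A| <= C.
  The truncation error of v at x_i is A exp (-b0 x_i / eps) times an explicit expression in the
  neighbouring steps. In the layer the mesh is uniform with step h; with s = b0 h / eps <= C ln N / N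
  and r = b(x_i) / b0 that expression is (b0^2 / eps) times a function of s and r which vanishes at
  r = 1 and is O(|r - 1| s^2) by a second-order expansion of (e^x - 1) / x. Since
  |r - 1| <= C x_i and (x_i / eps) exp (-b0 x_i / eps) <= C exp (-beta x_i / eps), this gives the
  bound N^-2 (ln N)^2 exp (-beta x_i / eps). Outside the layer a crude bound by
  exp (-b0 x_(i-1) / eps) / H <= C N^(1 - a b0 / beta) suffices, and this is at most C N^-a
  exactly when a >= beta / (b0 - beta).\<close>

section \<open>A priori bounds for the continuous problem\<close>

lemma continuous_on_compact_abs_bounded:
  fixes f :: "real \<Rightarrow> real"
  assumes "compact S" "continuous_on S f"
  obtains M where "\<forall>x\<in>S. \<bar>f x\<bar> \<le> M"
  using compact_imp_bounded[OF compact_continuous_image[OF assms(2,1)]]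
  unfolding bounded_real by auto

lemma Ck_on01_continuous: "Ck_on01 k g \<Longrightarrow> continuous_on {0..1} g"
  unfolding Ck_on01_def by (metis continuous_on_cong le0)

lemma Ck_on01_imp_C1:
  assumes "Ck_on01 k g" "0 < k"
  obtains g' where "continuous_on {0..1} g" "continuous_on {0..1} g'"
    "\<forall>x\<in>{0..1}. (g has_real_derivative g' x) (at x within {0..1})"
proof -
  obtain D where D0: "\<forall>x\<in>{0..1}. D 0 x = g x"
    and cont: "\<forall>j\<le>k. continuous_on {0..1} (D j)"
    and deriv: "\<forall>j<k. \<forall>x\<in>{0..1}. (D j has_real_derivative D (Suc j) x) (at x within {0..1})"
    using assms(1) unfolding Ck_on01_def by blast
  show thesis
  proof
    show "continuous_on {0..1} g"
      using continuous_on_cong[of "{0..1}" "{0..1}" "D 0" g] D0 cont by auto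
    show "continuous_on {0..1} (D 1)"
      using cont assms(2) by auto
    show "\<forall>x\<in>{0..1}. (g has_real_derivative D 1 x) (at x within {0..1})"
    proof
      fix x :: real assume x: "x \<in> {0..1}"
      have "(D 0 has_real_derivative D 1 x) (at x within {0..1})"
        using deriv x assms(2) by (metis One_nat_def)
      then show "(g has_real_derivative D 1 x) (at x within {0..1})"
        by (rule has_field_derivative_transform_within[where d=1]) (use x D0 in auto)
    qed
  qed
qed

lemma DERIV2_local_min:
  fixes w w' :: "real \<Rightarrow> real"
  assumes "0 < d"
    and min: "\<And>y. \<bar>y - x\<bar> < d \<Longrightarrow> w x \<le> w y"
    and w': "\<And>y. \<bar>y - x\<bar> < d \<Longrightarrow> (w has_real_derivative w' y) (at y)"
    and w'': "(w' has_real_derivative w'') (at x)"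
  shows "w' x = 0" and "0 \<le> w''"
proof -
  have "(w has_real_derivative w' x) (at x)"
    using w' \<open>0 < d\<close> by simp
  then show "w' x = 0"
    by (rule DERIV_local_min[OF _ \<open>0 < d\<close>]) (use min in \<open>auto simp: abs_minus_commute\<close>)
  show "0 \<le> w''"
  proof (rule ccontr)
    assume "\<not> 0 \<le> w''"
    then obtain e where e: "0 < e" "\<And>t. 0 < t \<Longrightarrow> t < e \<Longrightarrow> w' x < w' (x - t)"
      using DERIV_neg_dec_left[OF w''] by force
    define t where "t = min d e / 2"
    have t: "0 < t" "t < d" "t < e"
      using \<open>0 < d\<close> e(1) by (auto simp: t_def)
    obtain z where z: "x - t < z" "z < x" "w x - w (x - t) = (x - (x - t)) * w' z"
      using MVT2[of "x - t" x w w'] w' t by force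
    have "0 < w' z"
      using e(2)[of "x - z"] z t \<open>w' x = 0\<close> by auto
    then have "w (x - t) < w x"
      using z(3) mult_pos_pos[OF t(1)] by fastforce
    with min[of "x - t"] t show False
      by auto
  qed
qed

lemma maximum_principle_01:
  fixes w w' w'' p q :: "real \<Rightarrow> real"
  assumes "0 < eps"
    and deriv: "\<forall>x\<in>{0..1}. (w has_real_derivative w' x) (at x within {0..1})
                   \<and> (w' has_real_derivative w'' x) (at x within {0..1})"
    and supersolution: "\<forall>x\<in>{0<..<1}. 0 \<le> q x \<and> 0 < - eps * w'' x - p x * w' x + q x * w x"
    and "0 \<le> w 0" "0 \<le> w 1"
  shows "\<forall>x\<in>{0..1}. 0 \<le> w x"
proof (rule ccontr)
  assume "\<not> (\<forall>x\<in>{0..1}. 0 \<le> w x)"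
  then obtain y where y: "y \<in> {0..1}" "w y < 0" by force
  have "continuous_on {0..1} w"
    using deriv DERIV_continuous continuous_on_eq_continuous_within by blast
  then obtain x where x: "x \<in> {0..1}" "\<forall>z\<in>{0..1}. w x \<le> w z"
    using continuous_attains_inf[OF compact_Icc, of 0 1 w] by auto
  have "w x < 0" using x y by force
  have interior: "0 < x" "x < 1"
  proof -
    have "x \<noteq> 0" "x \<noteq> 1" using \<open>w x < 0\<close> assms(4,5) by auto
    then show "0 < x" "x < 1" using x(1) by auto
  qed
  have deriv_at: "(w has_real_derivative w' z) (at z)" "(w' has_real_derivative w'' z) (at z)"
    if "0 < z" "z < 1" for z
    using deriv[rule_format, of z] that at_within_Icc_at[of 0 z 1] by auto
  have "w x \<le> w z" "(w has_real_derivative w' z) (at z)" if "\<bar>z - x\<bar> < min x (1 - x)" for z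
    using that x(2) deriv_at(1)[of z] by (auto simp: abs_less_iff)
  then have "w' x = 0" "0 \<le> w'' x"
    using DERIV2_local_min[of "min x (1 - x)" x w w' "w'' x"] interior deriv_at(2) by auto
  moreover have "0 \<le> q x" "0 < - eps * w'' x - p x * w' x + q x * w x"
    using supersolution interior by auto
  moreover have "q x * w x \<le> 0" "0 \<le> eps * w'' x"
    using calculation \<open>w x < 0\<close> \<open>0 < eps\<close> by (simp_all add: mult_nonneg_nonpos)
  ultimately show False
    by simp
qed

lemma mvt_within:
  fixes f f' :: "real \<Rightarrow> real"
  assumes "a < b" "{a..b} \<subseteq> S"
    and deriv: "\<forall>x\<in>S. (f has_real_derivative f' x) (at x within S)"
  obtains y where "a < y" "y < b" "f b - f a = (b - a) * f' y"
proof -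
  have "(f has_derivative (*) (f' x)) (at x within {a..b})" if "a \<le> x" "x \<le> b" for x
    using DERIV_subset[of f "f' x" x S "{a..b}"] deriv that assms(2)
    by (auto simp: has_field_derivative_def)
  then obtain y where "y \<in> {a<..<b}" "f b - f a = f' y * (b - a)"
    using mvt_simple[OF \<open>a < b\<close>, of f "\<lambda>x. (*) (f' x)"] by blast
  then show thesis
    using that by (auto simp: mult.commute)
qed

text \<open>The summand 1 in the barrier constant makes the barrier a strict supersolution.\<close>
lemma solution_le_barrier:
  fixes b c f u u' u'' :: "real \<Rightarrow> real"
  assumes "0 < beta" and b_gt: "\<forall>x\<in>{0..1}. beta < b x" and c_nonneg: "\<forall>x\<in>{0..1}. 0 \<le> c x"
    and "0 < eps"
    and deriv: "\<forall>x\<in>{0..1}. (u has_real_derivative u' x) (at x within {0..1})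
                   \<and> (u' has_real_derivative u'' x) (at x within {0..1})"
    and ode: "\<forall>x\<in>{0<..<1}. - eps * u'' x - b x * u' x + c x * u x = f x"
    and f_le: "\<forall>x\<in>{0<..<1}. f x \<le> M" and "0 \<le> M" and "u 0 = 0" "u 1 = 0"
  shows "\<forall>x\<in>{0..1}. u x \<le> (M + 1) / beta * (1 - x)"
proof -
  define K where "K = (M + 1) / beta"
  have "0 < K" "beta * K = M + 1"
    using \<open>0 < beta\<close> \<open>0 \<le> M\<close> by (simp_all add: K_def)
  have "\<forall>x\<in>{0..1}. 0 \<le> K * (1 - x) - u x"
  proof (rule maximum_principle_01[where w' = "\<lambda>x. - K - u' x" and w'' = "\<lambda>x. - u'' x" and p = b and q = c])
    show "\<forall>x\<in>{0..1}. ((\<lambda>x. K * (1 - x) - u x) has_real_derivative - K - u' x) (at x within {0..1})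
            \<and> ((\<lambda>x. - K - u' x) has_real_derivative - u'' x) (at x within {0..1})"
      using deriv by (auto intro!: derivative_eq_intros)
    show "\<forall>x\<in>{0<..<1}. 0 \<le> c x \<and> 0 < - eps * - u'' x - b x * (- K - u' x) + c x * (K * (1 - x) - u x)"
    proof
      fix x :: real assume x: "x \<in> {0<..<1}"
      have "- eps * - u'' x - b x * (- K - u' x) + c x * (K * (1 - x) - u x)
            = b x * K + c x * K * (1 - x) - f x"
        using ode x by (auto simp: algebra_simps)
      moreover have "beta * K < b x * K" "0 \<le> c x * K * (1 - x)" "f x \<le> M"
        using b_gt c_nonneg f_le x \<open>0 < K\<close> by auto
      ultimately show "0 \<le> c x \<and> 0 < - eps * - u'' x - b x * (- K - u' x) + c x * (K * (1 - x) - u x)"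
        using c_nonneg x \<open>beta * K = M + 1\<close> by auto
    qed
  qed (use \<open>0 < eps\<close> \<open>u 0 = 0\<close> \<open>u 1 = 0\<close> \<open>0 < K\<close> in auto)
  then show ?thesis
    by (simp add: K_def)
qed

lemma solution_abs_bound:
  fixes b c f u u' u'' :: "real \<Rightarrow> real"
  assumes "0 < beta" "\<forall>x\<in>{0..1}. beta < b x" "\<forall>x\<in>{0..1}. 0 \<le> c x" "0 < eps"
    and deriv: "\<forall>x\<in>{0..1}. (u has_real_derivative u' x) (at x within {0..1})
                   \<and> (u' has_real_derivative u'' x) (at x within {0..1})"
    and ode: "\<forall>x\<in>{0<..<1}. - eps * u'' x - b x * u' x + c x * u x = f x"
    and f_bound: "\<forall>x\<in>{0..1}. \<bar>f x\<bar> \<le> M" and "u 0 = 0" "u 1 = 0"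
  shows "\<forall>x\<in>{0..1}. \<bar>u x\<bar> \<le> (M + 1) / beta"
proof -
  have "0 \<le> M"
    using f_bound by force
  have f_le: "f x \<le> M" "- f x \<le> M" if "x \<in> {0<..<1}" for x
    using f_bound[rule_format, of x] that by auto
  have upper: "\<forall>x\<in>{0..1}. u x \<le> (M + 1) / beta * (1 - x)"
    by (rule solution_le_barrier[OF assms(1-5) ode]) (use f_le \<open>0 \<le> M\<close> assms(8,9) in auto)
  have "\<forall>x\<in>{0..1}. - u x \<le> (M + 1) / beta * (1 - x)"
  proof (rule solution_le_barrier[OF assms(1-4), where f = "\<lambda>x. - f x"])
    show "\<forall>x\<in>{0..1}. ((\<lambda>x. - u x) has_real_derivative - u' x) (at x within {0..1})
            \<and> ((\<lambda>x. - u' x) has_real_derivative - u'' x) (at x within {0..1})"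
      using deriv by (auto intro!: derivative_eq_intros)
    show "\<forall>x\<in>{0<..<1}. - eps * - u'' x - b x * - u' x + c x * - u x = - f x"
      using ode by auto
  qed (use f_le \<open>0 \<le> M\<close> assms(8,9) in auto)
  moreover have "(M + 1) / beta * (1 - x) \<le> (M + 1) / beta" if "x \<in> {0..1}" for x
    using that \<open>0 < beta\<close> \<open>0 \<le> M\<close> by (intro mult_left_le) auto
  ultimately show ?thesis
    using upper by (meson abs_le_iff order_trans)
qed

text \<open>Rolle's theorem gives a point z with u'(z) = 0; integrating the equation, written as
  (eps u' + b u)' = (b' + c) u - f, over [0, z] then bounds eps u'(0).\<close>
lemma eps_deriv_at_0_bound:
  fixes b b' c f u u' u'' :: "real \<Rightarrow> real"
  assumes b': "\<forall>x\<in>{0..1}. (b has_real_derivative b' x) (at x within {0..1})"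
    and bounds: "\<forall>x\<in>{0..1}. \<bar>b x\<bar> \<le> Mb \<and> \<bar>b' x\<bar> \<le> Lb \<and> \<bar>c x\<bar> \<le> Mc \<and> \<bar>f x\<bar> \<le> Mf \<and> \<bar>u x\<bar> \<le> K"
    and deriv: "\<forall>x\<in>{0..1}. (u has_real_derivative u' x) (at x within {0..1})
                   \<and> (u' has_real_derivative u'' x) (at x within {0..1})"
    and ode: "\<forall>x\<in>{0<..<1}. - eps * u'' x - b x * u' x + c x * u x = f x"
    and "u 0 = 0" "u 1 = 0"
  shows "\<bar>eps * u' 0\<bar> \<le> (Mb + Lb + Mc) * K + Mf"
proof -
  obtain z where z: "0 < z" "z < 1" "u 1 - u 0 = (1 - 0) * u' z"
    using mvt_within[of 0 1 "{0..1}" u u'] deriv by auto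
  have "u' z = 0"
    using z(3) \<open>u 0 = 0\<close> \<open>u 1 = 0\<close> by simp
  define g where "g x = eps * u' x + b x * u x" for x
  define g' where "g' x = eps * u'' x + (b' x * u x + b x * u' x)" for x
  have "\<forall>x\<in>{0..1}. (g has_real_derivative g' x) (at x within {0..1})"
    unfolding g_def g'_def using deriv b' by (auto intro!: derivative_eq_intros)
  then obtain y where y: "0 < y" "y < z" "g z - g 0 = (z - 0) * g' y"
    using mvt_within[of 0 z "{0..1}" g g'] z by auto
  have y01: "y \<in> {0..1}" "y \<in> {0<..<1}" "z \<in> {0..1}"
    using y z by auto
  have "\<bar>g' y\<bar> = \<bar>(b' y * u y + c y * u y) - f y\<bar>"
    using ode y01(2) by (auto simp: g'_def algebra_simps)
  also have "\<dots> \<le> \<bar>b' y * u y\<bar> + \<bar>c y * u y\<bar> + \<bar>f y\<bar>"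
    using abs_triangle_ineq4[of "b' y * u y + c y * u y" "f y"]
      abs_triangle_ineq[of "b' y * u y" "c y * u y"] by linarith
  also have "\<dots> \<le> Lb * K + Mc * K + Mf"
    unfolding abs_mult using bounds y01(1) by (intro add_mono mult_mono) auto
  finally have "\<bar>z * g' y\<bar> \<le> Lb * K + Mc * K + Mf"
    using z mult_left_le_one_le[of "\<bar>g' y\<bar>" z] by (simp add: abs_mult)
  moreover have "\<bar>g z\<bar> \<le> Mb * K"
    using bounds[rule_format, OF y01(3)] \<open>u' z = 0\<close>
    by (auto simp: g_def abs_mult intro: mult_mono order_trans[OF abs_ge_zero])
  moreover have "eps * u' 0 = g z - z * g' y"
    using y(3) \<open>u 0 = 0\<close> by (simp add: g_def)
  ultimately show ?thesis
    using abs_triangle_ineq4[of "g z" "z * g' y"] by (simp add: distrib_right)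
qed

section \<open>The function (e^x - 1) / x\<close>

text \<open>By the division convention exprel 0 = 0 rather than 1; it is only used at nonzero arguments.\<close>
definition exprel :: "real \<Rightarrow> real" where
  "exprel x = (exp x - 1) / x"

definition exprel_deriv :: "real \<Rightarrow> real" where
  "exprel_deriv x = (x * exp x - exp x + 1) / x\<^sup>2"

lemma has_real_derivative_exprel: "x \<noteq> 0 \<Longrightarrow> (exprel has_real_derivative exprel_deriv x) (at x)"
  unfolding exprel_def exprel_deriv_def
  by (auto intro!: derivative_eq_intros simp: power2_eq_square field_simps)

lemma exprel_bounds:
  assumes "0 < x" "x \<le> X"
  shows "1 \<le> exprel x" "exprel x \<le> 1 + exp X * x / 2"
proof -
  obtain t where t: "\<bar>t\<bar> \<le> \<bar>x\<bar>" "exp x = (\<Sum>m<2. x ^ m / fact m) + exp t / fact 2 * x ^ 2"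
    using Maclaurin_exp_le[of x 2] by blast
  have "exp x = 1 + x + exp t / 2 * x\<^sup>2"
    using t(2) by (simp add: eval_nat_numeral)
  then have "exprel x = 1 + exp t * x / 2"
    using assms by (simp add: exprel_def field_simps power2_eq_square)
  moreover have "exp t * x / 2 \<le> exp X * x / 2"
    using t assms by (intro divide_right_mono mult_right_mono) auto
  ultimately show "1 \<le> exprel x" "exprel x \<le> 1 + exp X * x / 2"
    using assms by auto
qed

lemma exprel_deriv_bound:
  assumes "0 < x" "x \<le> X"
  shows "\<bar>exprel_deriv x - 1/2\<bar> \<le> x * (1/2 + (X + 1) * exp X / 6)"
proof -
  obtain t where t: "\<bar>t\<bar> \<le> \<bar>x\<bar>" "exp x = (\<Sum>m<3. x ^ m / fact m) + exp t / fact 3 * x ^ 3"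
    using Maclaurin_exp_le[of x 3] by blast
  have e: "exp x = 1 + x + x\<^sup>2/2 + exp t / 6 * x ^ 3"
    using t(2) by (simp add: eval_nat_numeral)
  have eq: "exprel_deriv x - 1/2 = x/2 + (x - 1) * exp t * x / 6"
    using assms unfolding exprel_deriv_def e by (simp add: field_simps power2_eq_square power3_eq_cube)
  have "\<bar>(x - 1) * exp t * x / 6\<bar> \<le> (X + 1) * exp X * x / 6"
    using assms t(1) by (auto simp: abs_mult intro!: divide_right_mono mult_right_mono mult_mono)
  then have "\<bar>exprel_deriv x - 1/2\<bar> \<le> x/2 + (X + 1) * exp X * x / 6"
    unfolding eq using abs_triangle_ineq[of "x/2" "(x - 1) * exp t * x / 6"] assms by simp
  then show ?thesis
    by (simp add: algebra_simps)
qed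

lemma exprel_neg_bounds:
  assumes "0 < s" "s \<le> X"
  shows "\<bar>s/2 - (1 - exprel (-s))\<bar> \<le> exp X * s\<^sup>2 / 6"
    and "\<bar>1 - exprel (-s)\<bar> \<le> s * (1/2 + X * exp X / 6)"
proof -
  obtain t where t: "\<bar>t\<bar> \<le> \<bar>-s\<bar>" "exp (-s) = (\<Sum>m<3. (-s) ^ m / fact m) + exp t / fact 3 * (-s) ^ 3"
    using Maclaurin_exp_le[of "-s" 3] by blast
  have "exp (-s) = 1 - s + s\<^sup>2/2 - exp t / 6 * s ^ 3"
    using t(2) by (simp add: eval_nat_numeral)
  then have eq: "s/2 - (1 - exprel (-s)) = exp t * s\<^sup>2 / 6"
    using assms by (simp add: exprel_def field_simps power2_eq_square power3_eq_cube)
  have upper: "exp t * s\<^sup>2 / 6 \<le> exp X * s\<^sup>2 / 6"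
    using t assms by (intro divide_right_mono mult_right_mono) auto
  then show "\<bar>s/2 - (1 - exprel (-s))\<bar> \<le> exp X * s\<^sup>2 / 6"
    unfolding eq by simp
  have "exp X * s\<^sup>2 / 6 \<le> s * (X * exp X / 6)"
    "0 \<le> exp t * s\<^sup>2 / 6" "0 \<le> s * (X * exp X / 6)"
    using assms by (auto simp: power2_eq_square mult_left_mono)
  with eq upper assms(1) have "1 - exprel (-s) \<le> s/2 + s * (X * exp X / 6)"
    "exprel (-s) - 1 \<le> s/2 + s * (X * exp X / 6)"
    by linarith+
  then show "\<bar>1 - exprel (-s)\<bar> \<le> s * (1/2 + X * exp X / 6)"
    by (simp add: distrib_left)
qed

lemma exprel_mvt:
  assumes "0 < s" "0 < r"
  obtains y where "0 < y" "y \<le> max 1 r * s" "exprel (r * s) - exprel s = (r - 1) * s * exprel_deriv y"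
proof (cases r "1::real" rule: linorder_cases)
  case less
  have "r * s < s" "0 < r * s"
    using less assms by auto
  then obtain y where "r * s < y" "y < s" "exprel s - exprel (r * s) = (s - r * s) * exprel_deriv y"
    using MVT2[of "r * s" s exprel exprel_deriv] has_real_derivative_exprel by fastforce
  with \<open>0 < r * s\<close> less show thesis
    by (intro that[of y]) (simp_all add: algebra_simps)
next
  case equal
  with assms show thesis
    by (intro that[of s]) auto
next
  case greater
  have "s < r * s"
    using greater assms by auto
  then obtain y where "s < y" "y < r * s" "exprel (r * s) - exprel s = (r * s - s) * exprel_deriv y"
    using MVT2[of s "r * s" exprel exprel_deriv] has_real_derivative_exprel assms by fastforce
  with greater assms show thesis
    by (intro that[of y]) (simp_all add: algebra_simps)
qed

text \<open>The truncation error of A exp (-b0 t / eps) on a uniform mesh, normalised by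
  A exp (-b0 x_i / eps) b0^2 / eps, as a function of s = b0 h / eps and r = b(x_i) / b0
  (see exp_tau_factor_uniform).\<close>
definition fine_defect :: "real \<Rightarrow> real \<Rightarrow> real" where
  "fine_defect s r =
     (1 - r) * (1 - exprel (-s)) + exprel (-s) * (exprel (r * s) - exprel s) / exprel (r * s)"

definition fine_remainder :: "real \<Rightarrow> real \<Rightarrow> real \<Rightarrow> real" where
  "fine_remainder s r y = s * (exprel_deriv y - 1/2) + (s/2 - (1 - exprel (-s)))
     - (1 - exprel (-s)) * (exprel (r * s) - 1 + s * exprel_deriv y)"

lemma fine_defect_eq_mvt:
  assumes "0 < s" "0 < r"
  obtains y where "0 < y" "y \<le> max 1 r * s"
    "fine_defect s r = (r - 1) * fine_remainder s r y / exprel (r * s)"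
proof -
  obtain y where y: "0 < y" "y \<le> max 1 r * s"
    and mvt: "exprel s = exprel (r * s) - (r - 1) * s * exprel_deriv y"
    using exprel_mvt[OF assms] by (metis add_diff_cancel_left' diff_add_cancel)
  have "exprel (r * s) \<noteq> 0"
    using exprel_bounds(1)[of "r * s" "r * s"] assms by auto
  then show thesis
    by (intro that[OF y]) (simp add: fine_defect_def fine_remainder_def mvt field_simps)
qed

lemma fine_remainder_bound:
  assumes s: "0 < s" and r: "0 < r" "r \<le> R" and "1 \<le> R" and X: "R * s \<le> X"
    and y: "0 < y" "y \<le> R * s"
  defines "c1 \<equiv> 1/2 + X * exp X / 6" and "c2 \<equiv> 1/2 + (X + 1) * exp X / 6"
  shows "\<bar>fine_remainder s r y\<bar> \<le> (R * c2 + exp X / 6 + c1 * (exp X * R / 2 + 1/2 + X * c2)) * s\<^sup>2"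
proof -
  have "s \<le> R * s" "r * s \<le> R * s"
    using s r \<open>1 \<le> R\<close> by simp_all
  then have sX: "s \<le> X" and rsX: "r * s \<le> X" and yX: "y \<le> X" and "0 \<le> X"
    using X y s by linarith+
  then have "0 \<le> c1" "0 \<le> c2"
    by (simp_all add: c1_def c2_def)
  define a1 Er d where "a1 = 1 - exprel (-s)" and "Er = exprel (r * s)" and "d = exprel_deriv y"
  have "Er \<le> 1 + exp X * (r * s) / 2" "1 \<le> Er"
    using exprel_bounds[of "r * s" X] s r rsX by (simp_all add: Er_def)
  moreover have "exp X * (r * s) / 2 \<le> exp X * (R * s) / 2"
    using \<open>r * s \<le> R * s\<close> by simp
  ultimately have Er_near_1: "\<bar>Er - 1\<bar> \<le> exp X * (R * s) / 2"
    by linarith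
  have a1: "\<bar>s/2 - a1\<bar> \<le> exp X / 6 * s\<^sup>2" "\<bar>a1\<bar> \<le> c1 * s"
    using exprel_neg_bounds[OF s sX] by (simp_all add: a1_def c1_def mult.commute)
  have "\<bar>d - 1/2\<bar> \<le> y * c2"
    using exprel_deriv_bound[OF y(1) yX] by (simp add: d_def c2_def)
  also have "\<dots> \<le> R * s * c2"
    using y(2) \<open>0 \<le> c2\<close> by (rule mult_right_mono)
  finally have d_near_half: "\<bar>d - 1/2\<bar> \<le> R * s * c2" .
  also have "\<dots> \<le> X * c2"
    using X \<open>0 \<le> c2\<close> by (rule mult_right_mono)
  finally have "\<bar>s * d\<bar> \<le> (1/2 + X * c2) * s"
    using s by (simp add: abs_mult abs_le_iff mult.commute mult_left_mono)
  with a1(2) Er_near_1 have "\<bar>a1\<bar> * \<bar>Er - 1 + s * d\<bar> \<le> c1 * s * (exp X * (R * s) / 2 + (1/2 + X * c2) * s)"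
    by (intro mult_mono order_trans[OF abs_triangle_ineq add_mono]) auto
  moreover have "\<bar>s * (d - 1/2)\<bar> \<le> s * (R * s * c2)"
    unfolding abs_mult using s d_near_half by (intro mult_mono) auto
  ultimately have "\<bar>fine_remainder s r y\<bar>
      \<le> s * (R * s * c2) + exp X / 6 * s\<^sup>2 + c1 * s * (exp X * (R * s) / 2 + (1/2 + X * c2) * s)"
    unfolding fine_remainder_def a1_def[symmetric] Er_def[symmetric] d_def[symmetric]
    using a1(1) abs_mult[of a1 "Er - 1 + s * d"]
      abs_triangle_ineq4[of "s * (d - 1/2) + (s/2 - a1)" "a1 * (Er - 1 + s * d)"]
      abs_triangle_ineq[of "s * (d - 1/2)" "s/2 - a1"] by linarith
  also have "\<dots> = (R * c2 + exp X / 6 + c1 * (exp X * R / 2 + 1/2 + X * c2)) * s\<^sup>2"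
    by (simp add: power2_eq_square algebra_simps)
  finally show ?thesis .
qed

text \<open>Both summands of fine_defect are of order |r - 1| s; their first-order terms cancel.\<close>
lemma fine_defect_bound:
  assumes "1 \<le> R" "0 \<le> X"
  obtains K where "0 \<le> K" "\<And>s r. 0 < s \<Longrightarrow> 0 < r \<Longrightarrow> r \<le> R \<Longrightarrow> R * s \<le> X \<Longrightarrow>
    \<bar>fine_defect s r\<bar> \<le> K * \<bar>r - 1\<bar> * s\<^sup>2"
proof -
  define c1 c2 where "c1 = 1/2 + X * exp X / 6" and "c2 = 1/2 + (X + 1) * exp X / 6"
  define K where "K = R * c2 + exp X / 6 + c1 * (exp X * R / 2 + 1/2 + X * c2)"
  have "\<bar>fine_defect s r\<bar> \<le> K * \<bar>r - 1\<bar> * s\<^sup>2"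
    if s: "0 < s" and r: "0 < r" "r \<le> R" and X: "R * s \<le> X" for s r
  proof -
    obtain y where y: "0 < y" "y \<le> max 1 r * s"
      and fd: "fine_defect s r = (r - 1) * fine_remainder s r y / exprel (r * s)"
      using fine_defect_eq_mvt[OF s r(1)] .
    have "1 \<le> exprel (r * s)"
      using exprel_bounds(1)[of "r * s" "r * s"] s r by simp
    then have "\<bar>fine_defect s r\<bar> \<le> \<bar>r - 1\<bar> * \<bar>fine_remainder s r y\<bar>"
      unfolding fd abs_divide abs_mult
      using mult_left_mono[of 1 "exprel (r * s)" "\<bar>r - 1\<bar> * \<bar>fine_remainder s r y\<bar>"]
      by (simp add: divide_le_eq)
    also have "\<dots> \<le> \<bar>r - 1\<bar> * (K * s\<^sup>2)"
    proof (rule mult_left_mono)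
      have "max 1 r * s \<le> R * s"
        using r assms s by (intro mult_right_mono) auto
      then show "\<bar>fine_remainder s r y\<bar> \<le> K * s\<^sup>2"
        using fine_remainder_bound[OF s r assms(1) X y(1)] y(2) by (simp add: K_def c1_def c2_def)
    qed simp
    finally show ?thesis
      by (simp add: algebra_simps)
  qed
  moreover have "0 \<le> K"
    using assms by (simp add: K_def c1_def c2_def)
  ultimately show thesis
    using that by blast
qed

section \<open>Truncation error of a scaled exponential\<close>

lemma sigma_pos_le_1:
  assumes "0 < r"
  shows "0 < sigma r" "sigma r \<le> 1"
proof -
  have "2 * r \<le> exp (2 * r) - 1"
    using exp_ge_add_one_self[of "2 * r"] by linarith
  then show "0 < sigma r" "sigma r \<le> 1"
    using assms by (auto simp: sigma_def divide_le_eq)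
qed

lemma deriv_scaled_exp:
  fixes A c :: real
  shows "deriv (\<lambda>t. A * exp (c * t)) = (\<lambda>t. A * c * exp (c * t))"
    and "deriv (deriv (\<lambda>t. A * exp (c * t))) = (\<lambda>t. A * c\<^sup>2 * exp (c * t))"
proof -
  have "((\<lambda>t. A * exp (c * t)) has_real_derivative A * c * exp (c * t)) (at t)" for A t
    by (auto intro!: derivative_eq_intros)
  then have deriv: "deriv (\<lambda>t. A * exp (c * t)) = (\<lambda>t. A * c * exp (c * t))" for A
    using DERIV_imp_deriv by blast
  show "deriv (\<lambda>t. A * exp (c * t)) = (\<lambda>t. A * c * exp (c * t))"
    by (rule deriv)
  show "deriv (deriv (\<lambda>t. A * exp (c * t))) = (\<lambda>t. A * c\<^sup>2 * exp (c * t))"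
    unfolding deriv deriv[of "A * c"] by (simp add: power2_eq_square mult.assoc)
qed

definition exp_tau_factor :: "real \<Rightarrow> real \<Rightarrow> real \<Rightarrow> real \<Rightarrow> real \<Rightarrow> real" where
  "exp_tau_factor eps b0 bi hm hp =
     - eps * sigma (bi * hp / (2 * eps))
       * ((exp (- b0 * hp / eps) - 1) / hp - (1 - exp (b0 * hm / eps)) / hm) / ((hm + hp) / 2)
     - bi * (exp (- b0 * hp / eps) - 1) / hp + b0 / eps * (b0 - bi)"

lemma tau_scaled_exp:
  fixes b :: "real \<Rightarrow> real" and x :: "nat \<Rightarrow> real"
  assumes "0 < eps" "x (i - 1) < x i" "x i < x (Suc i)"
  shows "tau eps b x (\<lambda>t. A * exp (- b0 * t / eps)) i
    = A * exp (- b0 * x i / eps)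
      * exp_tau_factor eps b0 (b (x i)) (x i - x (i - 1)) (x (Suc i) - x i)"
proof -
  define hm hp where "hm = x i - x (i - 1)" and "hp = x (Suc i) - x i"
  have "0 < hm" "0 < hp"
    using assms by (simp_all add: hm_def hp_def)
  have v: "(\<lambda>t. A * exp (- b0 * t / eps)) = (\<lambda>t. A * exp ((- b0 / eps) * t))"
    by simp
  have shift: "exp ((- b0 / eps) * (x i + h)) = exp ((- b0 / eps) * x i) * exp (- b0 * h / eps)" for h
    by (simp add: exp_add[symmetric] algebra_simps)
  have "x (Suc i) = x i + hp" "x (i - 1) = x i + - hm"
    by (simp_all add: hm_def hp_def)
  then have e: "exp ((- b0 / eps) * x (Suc i)) = exp ((- b0 / eps) * x i) * exp (- b0 * hp / eps)"
    "exp ((- b0 / eps) * x (i - 1)) = exp ((- b0 / eps) * x i) * exp (b0 * hm / eps)"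
    using shift[of hp] shift[of "- hm"] by simp_all
  have "exp (- b0 * x i / eps) = exp ((- b0 / eps) * x i)"
    by simp
  then show ?thesis
    unfolding tau_def Let_def v deriv_scaled_exp exp_tau_factor_def hm_def[symmetric] hp_def[symmetric] e
    using \<open>0 < eps\<close> \<open>0 < hm\<close> \<open>0 < hp\<close> by (simp add: field_simps power2_eq_square)
qed

lemma exp_tau_factor_uniform:
  assumes "0 < eps" "0 < h" "0 < b0" "0 < bi"
  shows "exp_tau_factor eps b0 bi h h = b0\<^sup>2 / eps * fine_defect (b0 * h / eps) (bi / b0)"
proof -
  define s where "s = b0 * h / eps"
  define r where "r = bi / b0"
  have "0 < s" "0 < r"
    using assms by (simp_all add: s_def r_def)
  have h: "h = s * eps / b0" and bi: "bi = r * b0" and rs: "r * s = bi * h / eps"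
    using assms by (simp_all add: s_def r_def)
  have "sigma (bi * h / (2 * eps)) = r * s / (exp (r * s) - 1)"
    using rs \<open>0 < s\<close> \<open>0 < r\<close> assms by (simp add: sigma_def)
  moreover have "exp (- b0 * h / eps) = 1 / exp s" "exp (b0 * h / eps) = exp s"
    by (simp_all add: s_def exp_minus inverse_eq_divide)
  moreover have "1 < exp s" "1 < exp (r * s)"
    using \<open>0 < s\<close> \<open>0 < r\<close> by simp_all
  ultimately show ?thesis
    unfolding exp_tau_factor_def fine_defect_def exprel_def s_def[symmetric] r_def[symmetric]
    using assms \<open>0 < s\<close> \<open>0 < r\<close>
    by (simp add: h bi exp_minus field_simps power2_eq_square)
qed

lemma damped_difference_quotient_le:
  fixes eps h hm hp sg D b0 E :: real
  assumes "0 < eps" "0 < h" "0 < hm" "0 < hp" "0 \<le> sg" "sg \<le> 1"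
    and "0 \<le> D" "D \<le> b0 * h / eps * E"
  shows "eps * sg * (D / h) / ((hm + hp) / 2) \<le> 2 * b0 * E / hp"
proof -
  have "b0 * h / eps * E = h / eps * (b0 * E)"
    by (simp add: divide_inverse ac_simps)
  then have "0 \<le> h / eps * (b0 * E)"
    using assms(7,8) by linarith
  moreover have "0 < h / eps"
    using assms(1,2) by simp
  ultimately have "0 \<le> b0 * E"
    by (meson mult_pos_neg not_le)
  have "eps * sg * (D / h) \<le> eps * 1 * (b0 * h / eps * E / h)"
    using assms by (intro mult_mono divide_right_mono) auto
  also have "\<dots> = b0 * E"
    using assms by simp
  finally have "eps * sg * (D / h) / ((hm + hp) / 2) \<le> b0 * E / ((hm + hp) / 2)"
    using assms by (intro divide_right_mono) auto
  also have "\<dots> \<le> b0 * E / (hp / 2)"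
    using assms \<open>0 \<le> b0 * E\<close> by (intro divide_left_mono) auto
  finally show ?thesis
    by (simp add: mult_ac)
qed

lemma exp_tau_factor_bound:
  assumes "0 < eps" "0 < hm" "0 < hp" "0 < b0" "0 < bi"
  shows "\<bar>exp_tau_factor eps b0 bi hm hp\<bar>
    \<le> (4 * b0 + bi) * exp (b0 * hm / eps) / hp + b0 / eps * \<bar>b0 - bi\<bar>"
proof -
  define ep em sg where "ep = exp (- b0 * hp / eps)" and "em = exp (b0 * hm / eps)"
    and "sg = sigma (bi * hp / (2 * eps))"
  have sg: "0 < sg" "sg \<le> 1"
    using sigma_pos_le_1[of "bi * hp / (2 * eps)"] assms by (simp_all add: sg_def)
  have ep: "0 < ep" "ep \<le> 1" "1 - ep \<le> b0 * hp / eps * 1"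
    using exp_ge_add_one_self[of "- b0 * hp / eps"] assms by (auto simp: ep_def)
  have em: "1 \<le> em" "em - 1 \<le> b0 * hm / eps * em"
  proof -
    show "1 \<le> em"
      using assms by (simp add: em_def)
    have "(1 - b0 * hm / eps) * em \<le> exp (- (b0 * hm / eps)) * em"
      using exp_ge_add_one_self[of "- (b0 * hm / eps)"] by (simp add: em_def)
    then show "em - 1 \<le> b0 * hm / eps * em"
      by (simp add: em_def exp_minus algebra_simps)
  qed
  have "exp_tau_factor eps b0 bi hm hp
      = eps * sg * ((1 - ep) / hp) / ((hm + hp) / 2) - eps * sg * ((em - 1) / hm) / ((hm + hp) / 2)
        + bi * (1 - ep) / hp + b0 / eps * (b0 - bi)"
    unfolding exp_tau_factor_def ep_def[symmetric] em_def[symmetric] sg_def[symmetric]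
    using assms by (simp add: diff_divide_distrib add_divide_distrib algebra_simps)
  moreover have "eps * sg * ((1 - ep) / hp) / ((hm + hp) / 2) \<le> 2 * b0 / hp"
    "eps * sg * ((em - 1) / hm) / ((hm + hp) / 2) \<le> 2 * b0 * em / hp"
    using damped_difference_quotient_le[of eps hp hm hp sg "1 - ep" b0 1]
      damped_difference_quotient_le[of eps hm hm hp sg "em - 1" b0 em] assms sg ep em
    by auto
  moreover have "0 \<le> eps * sg * ((1 - ep) / hp) / ((hm + hp) / 2)"
    "0 \<le> eps * sg * ((em - 1) / hm) / ((hm + hp) / 2)" "0 \<le> bi * (1 - ep) / hp"
    using assms sg ep em by auto
  moreover have "bi * (1 - ep) / hp \<le> bi * em / hp"
    using ep em assms by (intro divide_right_mono mult_left_mono) auto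
  moreover have "\<bar>b0 / eps * (b0 - bi)\<bar> = b0 / eps * \<bar>b0 - bi\<bar>"
    using assms by (simp add: abs_mult)
  moreover have "2 * b0 / hp \<le> 2 * b0 * em / hp"
    using assms em by (simp add: divide_right_mono)
  moreover have "(4 * b0 + bi) * em / hp = 2 * b0 * em / hp + 2 * b0 * em / hp + bi * em / hp"
    by (simp add: add_divide_distrib algebra_simps)
  ultimately show ?thesis
    unfolding em_def[symmetric] abs_le_iff
    using abs_ge_self[of "b0 / eps * (b0 - bi)"] abs_ge_minus_self[of "b0 / eps * (b0 - bi)"]
    by (intro conjI) linarith+
qed

section \<open>The Shishkin mesh\<close>

locale shishkin_mesh =
  fixes eps a beta Q :: real and N J :: nat
  assumes eps_pos: "0 < eps" and beta_pos: "0 < beta" and a_pos: "0 < a"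
    and Q_pos: "0 < Q" and Q_less_1: "Q < 1" and N_pos: "0 < N" and J_eq: "real J = Q * real N"
    and transition_le_Q: "sh_xi eps a beta N \<le> Q"
begin

abbreviation "xi \<equiv> sh_xi eps a beta N"
abbreviation "mesh \<equiv> sh_mesh eps a beta N J"

lemma J_pos: "0 < J"
proof -
  have "0 < real J"
    using J_eq Q_pos N_pos by simp
  then show ?thesis
    by simp
qed

lemma J_less_N: "J < N"
proof -
  have "real J < real N"
    using J_eq Q_less_1 N_pos by simp
  then show ?thesis
    by simp
qed

lemma ln_N_pos: "0 < ln (real N)"
  using J_pos J_less_N by simp

lemma xi_pos: "0 < xi"
  using ln_N_pos eps_pos a_pos beta_pos by (simp add: sh_xi_def)

lemma xi_less_1: "xi < 1"
  using transition_le_Q Q_less_1 by simp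

lemma mesh_fine: "i \<le> J \<Longrightarrow> mesh i = real i * (xi / real J)"
  by (simp add: sh_mesh_def Let_def)

lemma mesh_coarse: "J \<le> i \<Longrightarrow> mesh i = xi + (real i - real J) * ((1 - xi) / (real N - real J))"
  using J_pos by (cases "i = J") (auto simp: sh_mesh_def Let_def)

lemma mesh_coarse_Suc:
  assumes "J \<le> i"
  shows "mesh (Suc i) = mesh i + (1 - xi) / (real N - real J)"
proof -
  define H where "H = (1 - xi) / (real N - real J)"
  have "mesh i = xi + (real i - real J) * H" "mesh (Suc i) = xi + (real i + 1 - real J) * H"
    using assms by (simp_all add: mesh_coarse H_def)
  then show ?thesis
    unfolding H_def[symmetric] by (simp add: algebra_simps)
qed

lemma mesh_less_Suc: "mesh i < mesh (Suc i)"
proof (cases "J \<le> i")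
  case True
  then show ?thesis
    using xi_less_1 J_less_N by (simp add: mesh_coarse_Suc)
next
  case False
  then show ?thesis
    using xi_pos J_pos by (simp add: mesh_fine divide_strict_right_mono algebra_simps)
qed

lemma mesh_mono: "i \<le> j \<Longrightarrow> mesh i \<le> mesh j"
  using strict_mono_Suc_iff[of mesh] mesh_less_Suc by (simp add: strict_mono_less_eq)

lemma mesh_N: "mesh N = 1"
  using J_less_N J_pos by (simp add: mesh_coarse field_simps)

lemma mesh_range: "i \<le> N \<Longrightarrow> 0 \<le> mesh i \<and> mesh i \<le> 1"
  using mesh_mono[of 0 i] mesh_mono[of i N] mesh_N by (simp add: mesh_fine)

lemma mesh_fine_neighbours:
  assumes "1 \<le> i" "i < J"
  shows "mesh (i - 1) = mesh i - xi / real J" "mesh (Suc i) = mesh i + xi / real J"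
  using assms J_pos by (simp_all add: mesh_fine of_nat_diff field_simps)

lemma mesh_coarse_lower:
  assumes "J \<le> i"
  shows "xi \<le> mesh i" "xi - xi / real J \<le> mesh (i - 1)"
  using mesh_mono[of J i] mesh_mono[of "J - 1" "i - 1"] assms J_pos
  by (simp_all add: mesh_fine of_nat_diff field_simps)

lemma fine_step_scaled: "c * (xi / real J) / eps = c * a / (beta * Q) * (ln (real N) / real N)"
  using eps_pos beta_pos Q_pos N_pos by (simp add: J_eq sh_xi_def field_simps)

lemma fine_step_scaled_le:
  assumes "0 \<le> c"
  shows "c * (xi / real J) / eps \<le> c * a / (beta * Q)"
proof -
  have "ln (real N) / real N \<le> 1"
    using ln_le_minus_one[of "real N"] N_pos by (simp add: divide_le_eq)
  then show ?thesis
    unfolding fine_step_scaled by (rule mult_left_le) (use \<open>0 \<le> c\<close> a_pos beta_pos Q_pos in simp)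
qed

lemma coarse_step_lower: "(1 - Q) / real N \<le> (1 - xi) / (real N - real J)"
proof -
  have "(1 - Q) / real N \<le> (1 - xi) / real N"
    using transition_le_Q N_pos by (simp add: divide_right_mono)
  also have "\<dots> \<le> (1 - xi) / (real N - real J)"
    using xi_less_1 J_pos J_less_N by (intro divide_left_mono) auto
  finally show ?thesis .
qed

lemma exp_transition: "exp (- c * xi / eps) = real N powr (- a * c / beta)"
  using N_pos eps_pos beta_pos by (simp add: sh_xi_def powr_def field_simps)

text \<open>The only use of the lower bound on a: it gives N^(1 - a c / beta) <= N^-a.\<close>
lemma coarse_exp_weight:
  assumes "J \<le> i" "beta < c" "beta / (c - beta) \<le> a"
  shows "exp (- c * mesh (i - 1) / eps) / (mesh (Suc i) - mesh i)
    \<le> exp (c * a / (beta * Q)) / (1 - Q) * real N powr (- a)"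
proof -
  have "0 < c"
    using assms(2) beta_pos by simp
  have "exp (- c * mesh (i - 1) / eps) \<le> exp (- c * (xi - xi / real J) / eps)"
    using mesh_coarse_lower(2)[OF assms(1)] \<open>0 < c\<close> eps_pos by (simp add: divide_right_mono)
  also have "\<dots> = exp (c * (xi / real J) / eps) * exp (- c * xi / eps)"
    by (simp add: exp_add[symmetric] diff_divide_distrib algebra_simps)
  also have "\<dots> \<le> exp (c * a / (beta * Q)) * real N powr (- a * c / beta)"
    unfolding exp_transition using fine_step_scaled_le[of c] \<open>0 < c\<close>
    by (intro mult_right_mono) auto
  finally have num: "exp (- c * mesh (i - 1) / eps) \<le> exp (c * a / (beta * Q)) * real N powr (- a * c / beta)" .
  have "1 / (mesh (Suc i) - mesh i) \<le> 1 / ((1 - Q) / real N)"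
    unfolding mesh_coarse_Suc[OF assms(1)]
    using coarse_step_lower Q_less_1 N_pos xi_less_1 J_less_N by (intro divide_left_mono) auto
  then have den: "1 / (mesh (Suc i) - mesh i) \<le> real N / (1 - Q)"
    by simp
  have "1 - a * c / beta \<le> - a"
    using assms beta_pos by (simp add: field_simps)
  moreover have "real N powr (- a * c / beta) * real N = real N powr (1 + - a * c / beta)"
    using N_pos powr_add[of "real N" 1 "- a * c / beta"] by (simp add: mult.commute)
  ultimately have "real N powr (- a * c / beta) * real N \<le> real N powr (- a)"
    using N_pos by (simp add: powr_mono)
  have "exp (- c * mesh (i - 1) / eps) * (1 / (mesh (Suc i) - mesh i))
      \<le> exp (c * a / (beta * Q)) * real N powr (- a * c / beta) * (real N / (1 - Q))"
    using num den mesh_less_Suc[of i] by (intro mult_mono) auto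
  also have "\<dots> = exp (c * a / (beta * Q)) / (1 - Q) * (real N powr (- a * c / beta) * real N)"
    by simp
  also have "\<dots> \<le> exp (c * a / (beta * Q)) / (1 - Q) * real N powr (- a)"
    using \<open>real N powr (- a * c / beta) * real N \<le> real N powr (- a)\<close> Q_less_1
    by (intro mult_left_mono) auto
  finally show ?thesis
    by simp
qed

lemma exp_coarse_le:
  assumes "J \<le> i"
  shows "exp (- beta * mesh i / eps) \<le> real N powr (- a)"
proof -
  have "exp (- beta * mesh i / eps) \<le> exp (- beta * xi / eps)"
    using mesh_coarse_lower(1)[OF assms] beta_pos eps_pos by (simp add: divide_right_mono)
  also have "\<dots> = real N powr (- a)"
    using exp_transition[of beta] beta_pos by simp
  finally show ?thesis .
qed

end

section \<open>Truncation error of the layer function on the Shishkin mesh\<close>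

lemma mult_exp_neg_le:
  fixes t beta b0 :: real
  assumes "0 \<le> t" "beta < b0"
  shows "t * exp (- b0 * t) \<le> exp (- beta * t) / (b0 - beta)"
proof -
  have "(b0 - beta) * t \<le> exp ((b0 - beta) * t)"
    using exp_ge_add_one_self[of "(b0 - beta) * t"] by linarith
  then have "(b0 - beta) * t * exp (- b0 * t) \<le> exp ((b0 - beta) * t) * exp (- b0 * t)"
    by (simp add: mult_right_mono)
  also have "\<dots> = exp (- beta * t)"
    by (simp add: exp_add[symmetric] algebra_simps)
  finally show ?thesis
    using assms by (simp add: le_divide_eq algebra_simps)
qed

locale convection_coefficient =
  fixes b :: "real \<Rightarrow> real" and beta Mb Lb :: real
  assumes beta_pos: "0 < beta" and b_gt_beta: "\<forall>x\<in>{0..1}. beta < b x"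
    and b_le_Mb: "\<forall>x\<in>{0..1}. b x \<le> Mb"
    and b_lipschitz_at_0: "\<forall>x\<in>{0..1}. \<bar>b x - b 0\<bar> \<le> Lb * x"
begin

lemma b0_gt_beta: "beta < b 0" and b0_pos: "0 < b 0" and b0_le_Mb: "b 0 \<le> Mb"
  using b_gt_beta b_le_Mb beta_pos by force+

lemma Lb_nonneg: "0 \<le> Lb"
  using b_lipschitz_at_0 by (metis abs_ge_zero atLeastAtMost_iff mult.right_neutral order_trans order_refl zero_le_one)

lemma exp_weighted_b_deviation:
  assumes "x \<in> {0..1}" "0 < eps"
  shows "exp (- b 0 * x / eps) * (b 0 / eps * \<bar>b 0 - b x\<bar>)
    \<le> b 0 * Lb / (b 0 - beta) * exp (- beta * x / eps)"
proof -
  have "exp (- b 0 * x / eps) * (b 0 / eps * \<bar>b 0 - b x\<bar>)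
      \<le> exp (- b 0 * x / eps) * (b 0 / eps * (Lb * x))"
    using b_lipschitz_at_0 assms b0_pos by (intro mult_left_mono) (auto simp: abs_minus_commute)
  also have "\<dots> = b 0 * Lb * (x / eps * exp (- b 0 * (x / eps)))"
    by simp
  also have "\<dots> \<le> b 0 * Lb * (exp (- beta * (x / eps)) / (b 0 - beta))"
    using mult_exp_neg_le[of "x / eps" beta "b 0"] assms b0_gt_beta b0_pos Lb_nonneg
    by (intro mult_left_mono) auto
  finally show ?thesis
    by simp
qed

lemma tau_scaled_exp_uniform_step_bound:
  assumes "0 < eps" "0 < h" "xs (i - 1) = xs i - h" "xs (Suc i) = xs i + h" "xs i \<in> {0..1}"
    and "0 \<le> K"
    and K: "\<bar>fine_defect (b 0 * h / eps) (b (xs i) / b 0)\<bar>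
      \<le> K * \<bar>b (xs i) / b 0 - 1\<bar> * (b 0 * h / eps)\<^sup>2"
  shows "\<bar>tau eps b xs (\<lambda>t. A * exp (- b 0 * t / eps)) i\<bar>
    \<le> K * b 0 * Lb / (b 0 - beta) * \<bar>A\<bar> * (b 0 * h / eps)\<^sup>2 * exp (- beta * xs i / eps)"
proof -
  define x s where "x = xs i" and "s = b 0 * h / eps"
  have "0 < b x"
    using b_gt_beta \<open>xs i \<in> {0..1}\<close> beta_pos by (force simp: x_def)
  have "\<bar>tau eps b xs (\<lambda>t. A * exp (- b 0 * t / eps)) i\<bar>
      = \<bar>A\<bar> * (exp (- b 0 * x / eps) * ((b 0)\<^sup>2 / eps * \<bar>fine_defect s (b x / b 0)\<bar>))"
    using tau_scaled_exp[of eps xs i] exp_tau_factor_uniform[of eps h "b 0" "b x"] assms(1-4)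
      b0_pos \<open>0 < b x\<close>
    by (simp add: x_def s_def abs_mult)
  also have "\<dots> \<le> \<bar>A\<bar> * (exp (- b 0 * x / eps) * ((b 0)\<^sup>2 / eps * (K * \<bar>b x / b 0 - 1\<bar> * s\<^sup>2)))"
    using K b0_pos \<open>0 < eps\<close> by (intro mult_left_mono) (auto simp: x_def s_def)
  also have "\<dots> = K * \<bar>A\<bar> * s\<^sup>2 * (exp (- b 0 * x / eps) * (b 0 / eps * \<bar>b 0 - b x\<bar>))"
    using b0_pos by (simp add: power2_eq_square abs_minus_commute field_simps)
  also have "\<dots> \<le> K * \<bar>A\<bar> * s\<^sup>2 * (b 0 * Lb / (b 0 - beta) * exp (- beta * x / eps))"
    using exp_weighted_b_deviation[of x eps] assms(1,5) \<open>0 \<le> K\<close>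
    by (intro mult_left_mono) (auto simp: x_def)
  finally show ?thesis
    by (simp add: x_def s_def algebra_simps)
qed

lemma tau_scaled_exp_step_bound:
  assumes "0 < eps" "xs (i - 1) < xs i" "xs i < xs (Suc i)" "xs i \<in> {0..1}"
  shows "\<bar>tau eps b xs (\<lambda>t. A * exp (- b 0 * t / eps)) i\<bar>
    \<le> \<bar>A\<bar> * ((4 * b 0 + Mb) * (exp (- b 0 * xs (i - 1) / eps) / (xs (Suc i) - xs i))
          + b 0 * Lb / (b 0 - beta) * exp (- beta * xs i / eps))"
proof -
  define x hm hp where "x = xs i" and "hm = xs i - xs (i - 1)" and "hp = xs (Suc i) - xs i"
  have "0 < hm" "0 < hp" "x \<in> {0..1}"
    using assms by (simp_all add: x_def hm_def hp_def)
  then have "0 < b x" "b x \<le> Mb"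
    using b_gt_beta b_le_Mb beta_pos by force+
  have "\<bar>tau eps b xs (\<lambda>t. A * exp (- b 0 * t / eps)) i\<bar>
      = \<bar>A\<bar> * (exp (- b 0 * x / eps) * \<bar>exp_tau_factor eps (b 0) (b x) hm hp\<bar>)"
    using tau_scaled_exp[of eps xs i] assms(1-3) by (simp add: x_def hm_def hp_def abs_mult)
  also have "\<dots> \<le> \<bar>A\<bar> * (exp (- b 0 * x / eps)
      * ((4 * b 0 + b x) * exp (b 0 * hm / eps) / hp + b 0 / eps * \<bar>b 0 - b x\<bar>))"
    using exp_tau_factor_bound[of eps hm hp "b 0" "b x"] assms(1) \<open>0 < hm\<close> \<open>0 < hp\<close> b0_pos \<open>0 < b x\<close>
    by (intro mult_left_mono) auto
  also have "\<dots> = \<bar>A\<bar> * ((4 * b 0 + b x) * (exp (- b 0 * xs (i - 1) / eps) / hp)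
      + exp (- b 0 * x / eps) * (b 0 / eps * \<bar>b 0 - b x\<bar>))"
    by (simp add: x_def hm_def exp_add[symmetric] diff_divide_distrib algebra_simps)
  also have "\<dots> \<le> \<bar>A\<bar> * ((4 * b 0 + Mb) * (exp (- b 0 * xs (i - 1) / eps) / hp)
      + b 0 * Lb / (b 0 - beta) * exp (- beta * x / eps))"
    using exp_weighted_b_deviation[OF \<open>x \<in> {0..1}\<close> assms(1)] \<open>b x \<le> Mb\<close> \<open>0 < hp\<close>
    by (intro mult_left_mono add_mono divide_right_mono mult_right_mono) auto
  finally show ?thesis
    by (simp add: x_def hp_def)
qed

lemma tau_scaled_exp_fine_bound:
  assumes "0 < a" "0 < Q"
  obtains C where "0 \<le> C" "\<And>eps N J A i. shishkin_mesh eps a beta Q N J \<Longrightarrow> 1 \<le> i \<Longrightarrow> i < J \<Longrightarrow>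
    \<bar>tau eps b (sh_mesh eps a beta N J) (\<lambda>t. A * exp (- b 0 * t / eps)) i\<bar>
      \<le> C * \<bar>A\<bar> * (ln (real N))\<^sup>2 / (real N)\<^sup>2 * exp (- beta * sh_mesh eps a beta N J i / eps)"
proof -
  define X where "X = b 0 * a / (beta * Q)"
  have "0 \<le> Mb / b 0 * X"
    using assms beta_pos b0_pos b0_le_Mb by (simp add: X_def)
  then obtain K where "0 \<le> K" and K: "\<And>s r. 0 < s \<Longrightarrow> 0 < r \<Longrightarrow> r \<le> Mb / b 0 \<Longrightarrow>
      Mb / b 0 * s \<le> Mb / b 0 * X \<Longrightarrow> \<bar>fine_defect s r\<bar> \<le> K * \<bar>r - 1\<bar> * s\<^sup>2"
    using fine_defect_bound[of "Mb / b 0" "Mb / b 0 * X"] b0_le_Mb b0_pos by auto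
  show thesis
  proof (rule that[of "K * b 0 * Lb / (b 0 - beta) * X\<^sup>2"])
    show "0 \<le> K * b 0 * Lb / (b 0 - beta) * X\<^sup>2"
      using \<open>0 \<le> K\<close> b0_pos b0_gt_beta Lb_nonneg by simp
    fix eps N J A i
    assume "shishkin_mesh eps a beta Q N J" "1 \<le> i" "i < J"
    then interpret shishkin_mesh eps a beta Q N J
      by simp
    define s where "s = b 0 * (xi / real J) / eps"
    have "mesh i \<in> {0..1}"
      using mesh_range[of i] \<open>i < J\<close> J_less_N by simp
    then have "0 < b (mesh i)" "b (mesh i) / b 0 \<le> Mb / b 0"
      using b_gt_beta b_le_Mb beta_pos b0_pos by (force simp: divide_right_mono)+
    moreover have "0 < s" "s \<le> X"
      using xi_pos J_pos eps_pos b0_pos fine_step_scaled_le[of "b 0"] by (simp_all add: s_def X_def)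
    moreover have "Mb / b 0 * s \<le> Mb / b 0 * X"
      using \<open>s \<le> X\<close> b0_pos b0_le_Mb by (intro mult_left_mono) auto
    ultimately have "\<bar>fine_defect s (b (mesh i) / b 0)\<bar> \<le> K * \<bar>b (mesh i) / b 0 - 1\<bar> * s\<^sup>2"
      using b0_pos by (intro K) auto
    then have "\<bar>tau eps b mesh (\<lambda>t. A * exp (- b 0 * t / eps)) i\<bar>
        \<le> K * b 0 * Lb / (b 0 - beta) * \<bar>A\<bar> * s\<^sup>2 * exp (- beta * mesh i / eps)"
      using tau_scaled_exp_uniform_step_bound[OF eps_pos _ mesh_fine_neighbours[OF \<open>1 \<le> i\<close> \<open>i < J\<close>]
          \<open>mesh i \<in> {0..1}\<close> \<open>0 \<le> K\<close>] xi_pos J_pos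
      by (simp add: s_def)
    also have "\<dots> = K * b 0 * Lb / (b 0 - beta) * X\<^sup>2 * \<bar>A\<bar> * (ln (real N))\<^sup>2 / (real N)\<^sup>2
        * exp (- beta * mesh i / eps)"
      using fine_step_scaled[of "b 0"] by (simp add: s_def X_def power2_eq_square mult_ac)
    finally show "\<bar>tau eps b mesh (\<lambda>t. A * exp (- b 0 * t / eps)) i\<bar>
      \<le> K * b 0 * Lb / (b 0 - beta) * X\<^sup>2 * \<bar>A\<bar> * (ln (real N))\<^sup>2 / (real N)\<^sup>2
        * exp (- beta * mesh i / eps)" .
  qed
qed

lemma tau_scaled_exp_coarse_bound:
  assumes "Q < 1" "beta / (b 0 - beta) \<le> a"
  obtains C where "0 \<le> C" "\<And>eps N J A i. shishkin_mesh eps a beta Q N J \<Longrightarrow> J \<le> i \<Longrightarrow> i < N \<Longrightarrow>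
    \<bar>tau eps b (sh_mesh eps a beta N J) (\<lambda>t. A * exp (- b 0 * t / eps)) i\<bar>
      \<le> C * \<bar>A\<bar> * real N powr (- a)"
proof -
  define X where "X = b 0 * a / (beta * Q)"
  show thesis
  proof (rule that[of "(4 * b 0 + Mb) * exp X / (1 - Q) + b 0 * Lb / (b 0 - beta)"])
    show "0 \<le> (4 * b 0 + Mb) * exp X / (1 - Q) + b 0 * Lb / (b 0 - beta)"
      using b0_pos b0_le_Mb b0_gt_beta Lb_nonneg \<open>Q < 1\<close> by simp
    fix eps N J A i
    assume "shishkin_mesh eps a beta Q N J" "J \<le> i" "i < N"
    then interpret shishkin_mesh eps a beta Q N J
      by simp
    have "Suc (i - 1) = i"
      using \<open>J \<le> i\<close> J_pos by simp
    then have "mesh (i - 1) < mesh i"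
      using mesh_less_Suc[of "i - 1"] by simp
    moreover have "mesh i \<in> {0..1}"
      using mesh_range[of i] \<open>i < N\<close> by simp
    ultimately have "\<bar>tau eps b mesh (\<lambda>t. A * exp (- b 0 * t / eps)) i\<bar>
        \<le> \<bar>A\<bar> * ((4 * b 0 + Mb) * (exp (- b 0 * mesh (i - 1) / eps) / (mesh (Suc i) - mesh i))
          + b 0 * Lb / (b 0 - beta) * exp (- beta * mesh i / eps))"
      by (rule tau_scaled_exp_step_bound[OF eps_pos _ mesh_less_Suc[of i]])
    also have "\<dots> \<le> \<bar>A\<bar> * ((4 * b 0 + Mb) * (exp X / (1 - Q) * real N powr (- a))
        + b 0 * Lb / (b 0 - beta) * real N powr (- a))"
      using coarse_exp_weight[OF \<open>J \<le> i\<close> b0_gt_beta assms(2)] exp_coarse_le[OF \<open>J \<le> i\<close>]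
        b0_pos b0_le_Mb b0_gt_beta Lb_nonneg
      by (intro mult_left_mono add_mono) (simp_all add: X_def mult_left_mono)
    finally show "\<bar>tau eps b mesh (\<lambda>t. A * exp (- b 0 * t / eps)) i\<bar>
      \<le> ((4 * b 0 + Mb) * exp X / (1 - Q) + b 0 * Lb / (b 0 - beta)) * \<bar>A\<bar> * real N powr (- a)"
      by (simp add: algebra_simps)
  qed
qed

lemma tau_scaled_exp_shishkin_bound:
  assumes "0 < a" "0 < Q" "Q < 1" "beta / (b 0 - beta) \<le> a"
  obtains C where "\<And>eps N J A B. shishkin_mesh eps a beta Q N J \<Longrightarrow> \<bar>A\<bar> \<le> B \<Longrightarrow>
    let v = (\<lambda>t. A * exp (- b 0 * t / eps)); x = sh_mesh eps a beta N J
    in (\<forall>i. 1 \<le> i \<and> i < J \<longrightarrow>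
          \<bar>tau eps b x v i\<bar> \<le> B * C * (ln (real N))\<^sup>2 / (real N)\<^sup>2 * exp (- beta * x i / eps))
     \<and> (\<forall>i. J \<le> i \<and> i < N \<longrightarrow> \<bar>tau eps b x v i\<bar> \<le> B * C * real N powr (- a))"
proof -
  obtain Cf where "0 \<le> Cf" and fine: "\<And>eps N J A i. shishkin_mesh eps a beta Q N J \<Longrightarrow> 1 \<le> i \<Longrightarrow> i < J \<Longrightarrow>
      \<bar>tau eps b (sh_mesh eps a beta N J) (\<lambda>t. A * exp (- b 0 * t / eps)) i\<bar>
        \<le> Cf * \<bar>A\<bar> * (ln (real N))\<^sup>2 / (real N)\<^sup>2 * exp (- beta * sh_mesh eps a beta N J i / eps)"
    using tau_scaled_exp_fine_bound[OF assms(1,2)] by blast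
  obtain Cc where "0 \<le> Cc" and coarse: "\<And>eps N J A i. shishkin_mesh eps a beta Q N J \<Longrightarrow> J \<le> i \<Longrightarrow> i < N \<Longrightarrow>
      \<bar>tau eps b (sh_mesh eps a beta N J) (\<lambda>t. A * exp (- b 0 * t / eps)) i\<bar> \<le> Cc * \<bar>A\<bar> * real N powr (- a)"
    using tau_scaled_exp_coarse_bound[OF assms(3,4)] by blast
  show thesis
  proof (rule that[of "max Cf Cc"], unfold Let_def, intro conjI allI impI)
    fix eps N J i and A B :: real
    assume mesh: "shishkin_mesh eps a beta Q N J" and "\<bar>A\<bar> \<le> B"
    have "0 \<le> B"
      using \<open>\<bar>A\<bar> \<le> B\<close> abs_ge_zero order_trans by blast
    have "Cf * \<bar>A\<bar> \<le> B * max Cf Cc" "Cc * \<bar>A\<bar> \<le> B * max Cf Cc"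
      using mult_mono[OF \<open>\<bar>A\<bar> \<le> B\<close> max.cobounded1 \<open>0 \<le> B\<close> \<open>0 \<le> Cf\<close>]
        mult_mono[OF \<open>\<bar>A\<bar> \<le> B\<close> max.cobounded2 \<open>0 \<le> B\<close> \<open>0 \<le> Cc\<close>]
      by (simp_all add: mult.commute)
    show "\<bar>tau eps b (sh_mesh eps a beta N J) (\<lambda>t. A * exp (- b 0 * t / eps)) i\<bar>
        \<le> B * max Cf Cc * (ln (real N))\<^sup>2 / (real N)\<^sup>2 * exp (- beta * sh_mesh eps a beta N J i / eps)"
      if "1 \<le> i \<and> i < J"
    proof -
      have "Cf * \<bar>A\<bar> * (ln (real N))\<^sup>2 \<le> B * max Cf Cc * (ln (real N))\<^sup>2"
        using \<open>Cf * \<bar>A\<bar> \<le> B * max Cf Cc\<close> by (simp add: mult_right_mono)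
      then have "Cf * \<bar>A\<bar> * (ln (real N))\<^sup>2 / (real N)\<^sup>2 * exp (- beta * sh_mesh eps a beta N J i / eps)
          \<le> B * max Cf Cc * (ln (real N))\<^sup>2 / (real N)\<^sup>2 * exp (- beta * sh_mesh eps a beta N J i / eps)"
        by (rule mult_right_mono[OF divide_right_mono]) auto
      with fine[OF mesh, of i A] that show ?thesis
        by linarith
    qed
    show "\<bar>tau eps b (sh_mesh eps a beta N J) (\<lambda>t. A * exp (- b 0 * t / eps)) i\<bar>
        \<le> B * max Cf Cc * real N powr (- a)"
      if "J \<le> i \<and> i < N"
    proof -
      have "Cc * \<bar>A\<bar> * real N powr (- a) \<le> B * max Cf Cc * real N powr (- a)"
        using \<open>Cc * \<bar>A\<bar> \<le> B * max Cf Cc\<close> by (rule mult_right_mono) simp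
      with coarse[OF mesh, of i A] that show ?thesis
        by linarith
    qed
  qed
qed

end

lemma C1_convection_coefficient:
  fixes b b' :: "real \<Rightarrow> real"
  assumes "0 < beta" "\<forall>x\<in>{0..1}. beta < b x" "continuous_on {0..1} b" "continuous_on {0..1} b'"
    and deriv: "\<forall>x\<in>{0..1}. (b has_real_derivative b' x) (at x within {0..1})"
  obtains Mb Lb where "convection_coefficient b beta Mb Lb"
proof -
  obtain Mb Lb where Mb: "\<forall>x\<in>{0..1}. \<bar>b x\<bar> \<le> Mb" and Lb: "\<forall>x\<in>{0..1}. \<bar>b' x\<bar> \<le> Lb"
    using continuous_on_compact_abs_bounded[OF compact_Icc] assms(3,4) by metis
  have "\<bar>b x - b 0\<bar> \<le> Lb * x" if "x \<in> {0..1}" for x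
    using field_differentiable_bound[of "{0..1}" b b' Lb x 0] deriv Lb that by auto
  then have "convection_coefficient b beta Mb Lb"
    using assms(1,2) Mb by unfold_locales auto
  then show thesis ..
qed

lemma eps_deriv_at_0_uniform_bound:
  fixes b b' c f :: "real \<Rightarrow> real"
  assumes "0 < beta" "\<forall>x\<in>{0..1}. beta < b x" "\<forall>x\<in>{0..1}. 0 \<le> c x"
    and "continuous_on {0..1} b" "continuous_on {0..1} b'"
    and b': "\<forall>x\<in>{0..1}. (b has_real_derivative b' x) (at x within {0..1})"
    and "continuous_on {0..1} c" "continuous_on {0..1} f"
  obtains CA where "\<And>eps u u' u''. 0 < eps \<Longrightarrow>
      \<forall>x\<in>{0..1}. (u has_real_derivative u' x) (at x within {0..1})
                   \<and> (u' has_real_derivative u'' x) (at x within {0..1}) \<Longrightarrow>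
      \<forall>x\<in>{0<..<1}. - eps * u'' x - b x * u' x + c x * u x = f x \<Longrightarrow> u 0 = 0 \<Longrightarrow> u 1 = 0 \<Longrightarrow>
      \<bar>eps * u' 0\<bar> \<le> CA"
proof -
  obtain Mb Lb Mc Mf where bounds: "\<forall>x\<in>{0..1}. \<bar>b x\<bar> \<le> Mb" "\<forall>x\<in>{0..1}. \<bar>b' x\<bar> \<le> Lb"
    "\<forall>x\<in>{0..1}. \<bar>c x\<bar> \<le> Mc" "\<forall>x\<in>{0..1}. \<bar>f x\<bar> \<le> Mf"
    using continuous_on_compact_abs_bounded[OF compact_Icc] assms(4,5,7,8) by metis
  show thesis
  proof (rule that)
    fix eps and u u' u'' :: "real \<Rightarrow> real"
    assume "0 < eps"
      and deriv: "\<forall>x\<in>{0..1}. (u has_real_derivative u' x) (at x within {0..1})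
                   \<and> (u' has_real_derivative u'' x) (at x within {0..1})"
      and ode: "\<forall>x\<in>{0<..<1}. - eps * u'' x - b x * u' x + c x * u x = f x"
      and "u 0 = 0" "u 1 = 0"
    with bounds(4) have "\<forall>x\<in>{0..1}. \<bar>u x\<bar> \<le> (Mf + 1) / beta"
      using solution_abs_bound[OF assms(1-3)] by blast
    with bounds have "\<forall>x\<in>{0..1}. \<bar>b x\<bar> \<le> Mb \<and> \<bar>b' x\<bar> \<le> Lb \<and> \<bar>c x\<bar> \<le> Mc \<and> \<bar>f x\<bar> \<le> Mf
        \<and> \<bar>u x\<bar> \<le> (Mf + 1) / beta"
      by blast
    then show "\<bar>eps * u' 0\<bar> \<le> (Mb + Lb + Mc) * ((Mf + 1) / beta) + Mf"
      using eps_deriv_at_0_bound[OF b' _ deriv ode \<open>u 0 = 0\<close> \<open>u 1 = 0\<close>] by blast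
  qed
qed

theorem lemma1:
  fixes b c f :: "real \<Rightarrow> real" and beta Q a :: real
  assumes "Ck_on01 4 b" and "Ck_on01 4 c" and "Ck_on01 4 f"
    and "beta > 0" and "\<forall>x\<in>{0..1}. b x > beta" and "\<forall>x\<in>{0..1}. c x \<ge> 0"
    and "Q \<in> \<rat>" and "0 < Q" and "Q < 1"
    and "a > 0" and "a \<ge> beta / (b 0 - beta)"
  shows "\<exists>C. \<forall>eps N J u du ddu.
      0 < eps \<and> eps < 1 \<and> N > 0 \<and> real J = Q * real N
      \<and> sh_xi eps a beta N \<le> Q
      \<and> (\<forall>x\<in>{0..1}. (u has_real_derivative du x) (at x within {0..1})
                   \<and> (du has_real_derivative ddu x) (at x within {0..1}))
      \<and> continuous_on {0..1} ddu
      \<and> (\<forall>x\<in>{0<..<1}. - eps * ddu x - b x * du x + c x * u x = f x)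
      \<and> u 0 = 0 \<and> u 1 = 0
      \<longrightarrow> (let v = (\<lambda>t. - (eps * du 0 / b 0) * exp (- b 0 * t / eps));
               x = sh_mesh eps a beta N J
           in (\<forall>i. 1 \<le> i \<and> i < J \<longrightarrow>
                 \<bar>tau eps b x v i\<bar> \<le> C * (ln (real N))\<^sup>2 / (real N)\<^sup>2 * exp (- beta * x i / eps))
            \<and> (\<forall>i. J \<le> i \<and> i < N \<longrightarrow>
                 \<bar>tau eps b x v i\<bar> \<le> C * real N powr (- a)))"
proof -
  obtain b' where b: "continuous_on {0..1} b" "continuous_on {0..1} b'"
    "\<forall>x\<in>{0..1}. (b has_real_derivative b' x) (at x within {0..1})"
    using Ck_on01_imp_C1[OF assms(1)] by auto
  obtain CA where flux: "\<And>eps u u' u''. 0 < eps \<Longrightarrow>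
      \<forall>x\<in>{0..1}. (u has_real_derivative u' x) (at x within {0..1})
                   \<and> (u' has_real_derivative u'' x) (at x within {0..1}) \<Longrightarrow>
      \<forall>x\<in>{0<..<1}. - eps * u'' x - b x * u' x + c x * u x = f x \<Longrightarrow> u 0 = 0 \<Longrightarrow> u 1 = 0 \<Longrightarrow>
      \<bar>eps * u' 0\<bar> \<le> CA"
    using eps_deriv_at_0_uniform_bound[OF assms(4-6) b(1,2,3)] Ck_on01_continuous assms(2,3) by metis
  obtain Mb Lb where coefficient: "convection_coefficient b beta Mb Lb"
    using C1_convection_coefficient[OF assms(4,5) b] .
  obtain C where C: "\<And>eps N J A B. shishkin_mesh eps a beta Q N J \<Longrightarrow> \<bar>A\<bar> \<le> B \<Longrightarrow>
    let v = (\<lambda>t. A * exp (- b 0 * t / eps)); x = sh_mesh eps a beta N J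
    in (\<forall>i. 1 \<le> i \<and> i < J \<longrightarrow>
          \<bar>tau eps b x v i\<bar> \<le> B * C * (ln (real N))\<^sup>2 / (real N)\<^sup>2 * exp (- beta * x i / eps))
     \<and> (\<forall>i. J \<le> i \<and> i < N \<longrightarrow> \<bar>tau eps b x v i\<bar> \<le> B * C * real N powr (- a))"
    using convection_coefficient.tau_scaled_exp_shishkin_bound[OF coefficient assms(10,8,9,11)] by blast
  have "0 < b 0"
    using assms(4,5) by force
  show ?thesis
    by (intro exI[of _ "CA / b 0 * C"] allI impI, elim conjE, rule C)
      (auto simp: shishkin_mesh_def assms(4,8-10) abs_divide abs_of_pos[OF \<open>0 < b 0\<close>] less_imp_le[OF \<open>0 < b 0\<close>] intro!: divide_right_mono flux)
qed

end
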